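(* Suppose Assumption A holds with $\beta,\gamma\in(0,\infty)$, fix $\mu>0$ and $\sigma\in\mathcal X$, and let $\pi^{\mu,\sigma}$ be a perturbed equilibrium. Run MD-SP with full feedback and constant learning rate $$\eta\in\Big(0,\frac{2\mu\gamma\rho^2}{\mu^2\gamma\rho^2(\gamma+2\beta)+8L^2}\Big).$$ Then for every initial profile $\pi^0\in\mathcal X$ and every $t\ge1$, $$D_\psi(\pi^{\mu,\sigma},\pi^t)\le D_\psi(\pi^{\mu,\sigma},\pi^0)\Big(1-\frac{\eta\mu\gamma}{2}\Big)^t.$$
   Context: Game. Let $N\ge1$. For each $i\in[N]$, $\mathcal X_i\subseteq\mathbb R^{d_i}$ is a nonempty compact convex set, and $\mathcal X=\prod_i\mathcal X_i$. Each $v_i:\mathcal X\to\mathbb R$ is differentiable, with block gradient $\nabla_{\pi_i}v_i$. The norm is Euclidean, with $\|\pi\|^2=\sum_i\|\pi_i\|^2$. The game is monotone: $\sum_i\langle\nabla_{\pi_i}v_i(\pi)-\nabla_{\pi_i}v_i(\pi'),\pi_i-\pi_i'\rangle\le0$. The game is $L$-smooth: $\sum_i\|\nabla_{\pi_i}v_i(\pi)-\nabla_{\pi_i}v_i(\pi')\|^2\le L^2\|\pi-\pi'\|^2$. Regularizer. $\psi:\mathcal X_i\to\mathbb R$ is differentiable on $\mathcal X_i$ and $\rho$-strongly convex with respect to $\|\cdot\|$ ($\rho>0$). Bregman divergence: $D_\psi(x,y)=\psi(x)-\psi(y)-\langle\nabla\psi(y),x-y\rangle$, and $D_\psi(\pi,\pi')=\sum_iD_\psi(\pi_i,\pi_i')$.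 Perturbation. $G:\mathcal X_i\times\mathcal X_i\to[0,\infty)$ is differentiable in its first argument, with gradient $\nabla_{\pi_i}G$ in that argument. $G(\cdot,\sigma_i)$ is strictly convex with minimum value $0$ at $\sigma_i$. For $\mu>0$ and $\sigma\in\mathcal X$, $\pi^{\mu,\sigma}$ is a profile with $\pi_i^{\mu,\sigma}\in\arg\max_{\pi_i}\{v_i(\pi_i,\pi^{\mu,\sigma}_{-i})-\mu G(\pi_i,\sigma_i)\}$ for all $i$. Assumption A: for all $\sigma_i,\pi_i,\pi_i'\in\mathcal X_i$, $$\gamma D_\psi(\pi_i',\pi_i)\le G(\pi_i',\sigma_i)-G(\pi_i,\sigma_i)-\langle\nabla_{\pi_i}G(\pi_i,\sigma_i),\pi_i'-\pi_i\rangle\le\beta D_\psi(\pi_i',\pi_i).$$ MD-SP with full feedback: $$\pi_i^{t+1}=\arg\max_{x\in\mathcal X_i}\{\eta_t\langle\nabla_{\pi_i}v_i(\pi^t)-\mu\nabla_{\pi_i}G(\pi_i^t,\sigma_i),x\rangle-D_\psi(x,\pi_i^t)\}.$$ *)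

theory Defs
  imports "HOL-Analysis.Analysis"
begin

definition strict_convex_on :: "'a::real_vector set \<Rightarrow> ('a \<Rightarrow> real) \<Rightarrow> bool" where
  "strict_convex_on S f \<longleftrightarrow> convex S \<and>
     (\<forall>x\<in>S. \<forall>y\<in>S. x \<noteq> y \<longrightarrow> (\<forall>t::real. 0 < t \<and> t < 1 \<longrightarrow>
        f ((1 - t) *\<^sub>R x + t *\<^sub>R y) < (1 - t) * f x + t * f y))"

definition strongly_convex_on :: "real \<Rightarrow> 'a::real_normed_vector set \<Rightarrow> ('a \<Rightarrow> real) \<Rightarrow> bool" where
  "strongly_convex_on \<rho> S f \<longleftrightarrow> convex S \<and>
     (\<forall>x\<in>S. \<forall>y\<in>S. \<forall>t::real. 0 \<le> t \<and> t \<le> 1 \<longrightarrow>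
        f ((1 - t) *\<^sub>R x + t *\<^sub>R y) \<le> (1 - t) * f x + t * f y - \<rho> / 2 * t * (1 - t) * (norm (x - y))\<^sup>2)"

definition bregman :: "('a::real_inner \<Rightarrow> real) \<Rightarrow> ('a \<Rightarrow> 'a) \<Rightarrow> 'a \<Rightarrow> 'a \<Rightarrow> real" where
  "bregman \<psi> g\<psi> x y = \<psi> x - \<psi> y - inner (g\<psi> y) (x - y)"

definition bregman_prof :: "('i::finite \<Rightarrow> 'a::real_inner \<Rightarrow> real) \<Rightarrow> ('i \<Rightarrow> 'a \<Rightarrow> 'a) \<Rightarrow> ('i \<Rightarrow> 'a) \<Rightarrow> ('i \<Rightarrow> 'a) \<Rightarrow> real" where
  "bregman_prof \<psi> g\<psi> p q = (\<Sum>i\<in>UNIV. bregman (\<psi> i) (g\<psi> i) (p i) (q i))"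

end

theory Submission
  imports Defs
begin

text \<open>
  Write p for the perturbed equilibrium, x and x' for consecutive iterates and D for the profile
  Bregman divergence. The first-order optimality of the mirror step (through the three-point
  identity of Bregman divergences), the variational inequality satisfied by p, Assumption A and
  the monotonicity of the game give
    D(p, x') \<le> (1 - \<eta>\<mu>\<gamma>) D(p, x) - (1 - \<eta>\<mu>\<beta>) D(x', x) - \<eta>\<mu>\<gamma> D(x', p)
              + \<eta> \<Sum>_i \<langle>\<nabla>v_i(x) - \<nabla>v_i(x'), x'_i - p_i\<rangle>.
  Young's inequality, L-smoothness and the \<rho>-strong convexity of \<psi> bound the last sum by
  2\<eta>L^2/(\<mu>\<gamma>\<rho>^2) D(x', x) + \<eta>\<mu>\<gamma>/2 D(x', p). The learning-rate bound makes the resulting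
  coefficient of D(x', x) nonpositive, so every step contracts D(p, -) by the factor
  1 - \<eta>\<mu>\<gamma> \<le> 1 - \<eta>\<mu>\<gamma>/2.
\<close>

lemma convex_step_towards:
  assumes "convex S" "x \<in> S" "z \<in> S" "0 \<le> s" "s \<le> 1"
  shows "x + s *\<^sub>R (z - x) \<in> S"
proof -
  have "x + s *\<^sub>R (z - x) = (1 - s) *\<^sub>R x + s *\<^sub>R z" by (simp add: algebra_simps)
  then show ?thesis using assms by (auto simp: convex_alt)
qed

lemma has_derivative_within_convex_le:
  fixes f :: "'a::real_normed_vector \<Rightarrow> real"
  assumes D: "(f has_derivative f') (at x within S)" and S: "convex S" "x \<in> S" "z \<in> S"
    and incr: "\<And>s. 0 < s \<Longrightarrow> s < 1 \<Longrightarrow> f (x + s *\<^sub>R (z - x)) - f x \<le> s * B + s\<^sup>2 * C"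
  shows "f' (z - x) \<le> B"
proof -
  define p where "p = (\<lambda>s::real. x + s *\<^sub>R (z - x))"
  have p_deriv: "(p has_derivative (\<lambda>s. s *\<^sub>R (z - x))) (at 0 within {0..1})"
    unfolding p_def by (auto intro!: derivative_eq_intros)
  have "p ` {0..1} \<subseteq> S"
    using convex_step_towards[OF S] by (auto simp: p_def)
  then have f_deriv: "(f has_derivative f') (at (p 0) within p ` {0..1})"
    using has_derivative_subset[OF D] by (simp add: p_def)
  have "f' \<circ> (\<lambda>s. s *\<^sub>R (z - x)) = (*) (f' (z - x))"
    using linear_scale[OF has_derivative_linear[OF D]] by (auto simp: fun_eq_iff)
  then have "((f \<circ> p) has_field_derivative f' (z - x)) (at 0 within {0..1})"
    using diff_chain_within[OF p_deriv f_deriv] by (simp add: has_field_derivative_def)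
  then have quotient_lim: "((\<lambda>s. (f (p s) - f (p 0)) / s) \<longlongrightarrow> f' (z - x)) (at_right 0)"
    unfolding has_field_derivative_iff using at_within_Icc_at_right[of "0::real" 1] by simp
  have bound_lim: "((\<lambda>s. B + s * C) \<longlongrightarrow> B + 0 * C) (at_right (0::real))"
    by (intro tendsto_intros)
  have "\<forall>\<^sub>F s in at_right (0::real). (f (p s) - f (p 0)) / s \<le> B + s * C"
    using eventually_at_right_real[OF zero_less_one]
  proof (rule eventually_mono)
    fix s :: real assume s: "s \<in> {0<..<1}"
    with incr[of s] have "f (p s) - f (p 0) \<le> s * (B + s * C)"
      by (simp add: p_def power2_eq_square algebra_simps)
    with s show "(f (p s) - f (p 0)) / s \<le> B + s * C"
      by (simp add: divide_le_eq mult.commute)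
  qed
  from tendsto_le[OF _ bound_lim quotient_lim this] show ?thesis by simp
qed

lemma has_derivative_within_convex_maximum:
  fixes f :: "'a::real_normed_vector \<Rightarrow> real"
  assumes "(f has_derivative f') (at x within S)" "convex S" "x \<in> S" "z \<in> S"
    and max: "\<And>y. y \<in> S \<Longrightarrow> f y \<le> f x"
  shows "f' (z - x) \<le> 0"
  using assms(1-4)
proof (rule has_derivative_within_convex_le[where C = 0])
  fix s :: real assume "0 < s" "s < 1"
  with max convex_step_towards[OF assms(2-4)] show "f (x + s *\<^sub>R (z - x)) - f x \<le> s * 0 + s\<^sup>2 * 0"
    by simp
qed

lemma bregman_three_point:
  "bregman f g a c - bregman f g a b - bregman f g b c = inner (g b - g c) (a - b)"
  by (simp add: bregman_def inner_diff_left inner_diff_right algebra_simps)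

lemma bregman_ge_strongly_convex:
  fixes \<psi> :: "'a::real_inner \<Rightarrow> real"
  assumes sc: "strongly_convex_on \<rho> S \<psi>"
    and D: "(\<psi> has_derivative (\<lambda>h. inner (g y) h)) (at y within S)"
    and "x \<in> S" "y \<in> S"
  shows "\<rho> / 2 * (norm (x - y))\<^sup>2 \<le> bregman \<psi> g x y"
proof -
  let ?q = "\<rho> / 2 * (norm (x - y))\<^sup>2"
  have "convex S" using sc unfolding strongly_convex_on_def by blast
  have "inner (g y) (x - y) \<le> \<psi> x - \<psi> y - ?q"
  proof (rule has_derivative_within_convex_le[OF D \<open>convex S\<close> \<open>y \<in> S\<close> \<open>x \<in> S\<close>, of _ ?q])
    fix s :: real assume s: "0 < s" "s < 1"
    have "(1 - s) *\<^sub>R y + s *\<^sub>R x = y + s *\<^sub>R (x - y)" by (simp add: algebra_simps)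
    moreover have "\<psi> ((1 - s) *\<^sub>R y + s *\<^sub>R x) \<le> (1 - s) * \<psi> y + s * \<psi> x - \<rho> / 2 * s * (1 - s) * (norm (y - x))\<^sup>2"
      using sc assms(3,4) s unfolding strongly_convex_on_def by auto
    ultimately have "\<psi> (y + s *\<^sub>R (x - y)) \<le> (1 - s) * \<psi> y + s * \<psi> x - s * (1 - s) * ?q"
      by (simp add: norm_minus_commute mult_ac)
    then show "\<psi> (y + s *\<^sub>R (x - y)) - \<psi> y \<le> s * (\<psi> x - \<psi> y - ?q) + s\<^sup>2 * ?q"
      by (simp add: power2_eq_square algebra_simps diff_divide_distrib)
  qed
  then show ?thesis unfolding bregman_def by simp
qed

lemma mirror_step_three_point:
  fixes \<psi> :: "'a::real_inner \<Rightarrow> real"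
  assumes "convex S"
    and D: "(\<psi> has_derivative (\<lambda>h. inner (g x') h)) (at x' within S)"
    and argmax: "\<And>x. x \<in> S \<Longrightarrow> \<eta> * inner w x - bregman \<psi> g x y \<le> \<eta> * inner w x' - bregman \<psi> g x' y"
    and "a \<in> S" "x' \<in> S"
  shows "\<eta> * inner w (a - x') \<le> bregman \<psi> g a y - bregman \<psi> g a x' - bregman \<psi> g x' y"
proof -
  have "((\<lambda>x. \<eta> * inner w x - bregman \<psi> g x y) has_derivative
      (\<lambda>h. \<eta> * inner w h - (inner (g x') h - inner (g y) h))) (at x' within S)"
    unfolding bregman_def by (auto intro!: derivative_eq_intros D simp: inner_diff_right)
  from has_derivative_within_convex_maximum[OF this assms(1,5,4) argmax]
  show ?thesis by (simp add: bregman_three_point inner_diff_left)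
qed

lemma inner_gradient_gap_le_bregman:
  assumes "\<gamma> * bregman \<psi> g\<psi> y p \<le> bregman G gG y p"
    and "\<gamma> * bregman \<psi> g\<psi> p x \<le> bregman G gG p x"
    and "bregman G gG y x \<le> \<beta> * bregman \<psi> g\<psi> y x"
  shows "inner (gG p - gG x) (y - p)
    \<le> \<beta> * bregman \<psi> g\<psi> y x - \<gamma> * bregman \<psi> g\<psi> y p - \<gamma> * bregman \<psi> g\<psi> p x"
  using bregman_three_point[of G gG y x p] assms by linarith

lemma inner_le_Young:
  fixes u w :: "'a::real_inner"
  assumes "c > 0"
  shows "inner u w \<le> (norm u)\<^sup>2 / (2 * c) + c / 2 * (norm w)\<^sup>2"
proof -
  have "0 \<le> (norm (u - c *\<^sub>R w))\<^sup>2" by simp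
  also have "\<dots> = (norm u)\<^sup>2 - 2 * c * inner u w + c\<^sup>2 * (norm w)\<^sup>2"
    by (simp only: power2_norm_eq_inner)
      (simp add: inner_diff_left inner_diff_right inner_commute[of w u] power2_eq_square algebra_simps)
  finally have "2 * c * inner u w \<le> (norm u)\<^sup>2 + c\<^sup>2 * (norm w)\<^sup>2" by simp
  with assms show ?thesis
    by (simp add: field_simps power2_eq_square)
qed

lemma geometric_decay:
  fixes a :: "nat \<Rightarrow> real"
  assumes "0 \<le> q" and step: "\<And>t. a (Suc t) \<le> q * a t"
  shows "a t \<le> a 0 * q ^ t"
proof (induction t)
  case (Suc t)
  have "a (Suc t) \<le> q * (a 0 * q ^ t)"
    using step[of t] mult_left_mono[OF Suc.IH \<open>0 \<le> q\<close>] by linarith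
  then show ?case by (simp add: mult_ac)
qed simp

lemma learning_rate_bounds:
  fixes L \<rho> \<beta> \<gamma> \<mu> \<eta> :: real
  assumes pos: "0 < \<rho>" "0 < \<beta>" "0 < \<gamma>" "0 < \<mu>" "0 < \<eta>"
    and \<eta>_bound: "\<eta> < 2 * \<mu> * \<gamma> * \<rho>\<^sup>2 / (\<mu>\<^sup>2 * \<gamma> * \<rho>\<^sup>2 * (\<gamma> + 2 * \<beta>) + 8 * L\<^sup>2)"
  shows "\<eta> * \<mu> * \<gamma> < 2" and "2 * \<eta> * L\<^sup>2 / (\<mu> * \<gamma> * \<rho>\<^sup>2) + \<eta> * \<mu> * \<beta> \<le> 1"
proof -
  define K where "K = \<mu> * \<gamma> * \<rho>\<^sup>2"
  have K_pos: "0 < K" using pos by (simp add: K_def)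
  have "0 < \<mu>\<^sup>2 * \<gamma> * \<rho>\<^sup>2 * (\<gamma> + 2 * \<beta>) + 8 * L\<^sup>2"
    using pos by (intro add_pos_nonneg) auto
  with \<eta>_bound have "\<eta> * (\<mu> * \<gamma> * K + 2 * \<mu> * \<beta> * K + 8 * L\<^sup>2) < 2 * K"
    by (simp add: K_def less_divide_eq power2_eq_square algebra_simps)
  moreover have "\<eta> * (\<mu> * \<gamma> * K + 2 * \<mu> * \<beta> * K + 8 * L\<^sup>2)
      = (\<eta> * \<mu> * \<gamma>) * K + 2 * ((\<eta> * \<mu> * \<beta>) * K) + 8 * (\<eta> * L\<^sup>2)"
    by (simp add: algebra_simps)
  moreover have "0 \<le> (\<eta> * \<mu> * \<gamma>) * K" "0 \<le> (\<eta> * \<mu> * \<beta>) * K" "0 \<le> \<eta> * L\<^sup>2"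
    using pos K_pos by auto
  ultimately have "(\<eta> * \<mu> * \<gamma>) * K < 2 * K" and "2 * (\<eta> * L\<^sup>2) + (\<eta> * \<mu> * \<beta>) * K \<le> K"
    by linarith+
  with K_pos have "\<eta> * \<mu> * \<gamma> < 2" and "2 * \<eta> * L\<^sup>2 / K + \<eta> * \<mu> * \<beta> \<le> 1"
    by (simp_all add: field_simps)
  then show "\<eta> * \<mu> * \<gamma> < 2" and "2 * \<eta> * L\<^sup>2 / (\<mu> * \<gamma> * \<rho>\<^sup>2) + \<eta> * \<mu> * \<beta> \<le> 1"
    by (simp_all add: K_def)
qed

text \<open>
  Nonemptiness and compactness of the strategy sets and nonnegativity, strict convexity and
  normalisation of G only serve to make the perturbed equilibrium exist; the rate needs none
  of them.
\<close>

locale perturbed_mirror_descent =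
  fixes X :: "'i::finite \<Rightarrow> 'a::real_inner set"
    and v :: "'i \<Rightarrow> ('i \<Rightarrow> 'a) \<Rightarrow> real"
    and gv :: "'i \<Rightarrow> ('i \<Rightarrow> 'a) \<Rightarrow> 'a"
    and \<psi> :: "'i \<Rightarrow> 'a \<Rightarrow> real" and g\<psi> :: "'i \<Rightarrow> 'a \<Rightarrow> 'a"
    and G :: "'i \<Rightarrow> 'a \<Rightarrow> 'a \<Rightarrow> real" and gG :: "'i \<Rightarrow> 'a \<Rightarrow> 'a \<Rightarrow> 'a"
    and L \<rho> \<beta> \<gamma> \<mu> \<eta> :: real
    and \<sigma> \<pi>\<mu> :: "'i \<Rightarrow> 'a"
    and \<pi> :: "nat \<Rightarrow> 'i \<Rightarrow> 'a"
  assumes X_convex: "\<And>i. convex (X i)"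
    and v_grad: "\<And>p i. (\<forall>j. p j \<in> X j) \<Longrightarrow>
        ((\<lambda>x. v i (p(i := x))) has_derivative (\<lambda>h. inner (gv i p) h)) (at (p i) within X i)"
    and monotone: "\<And>p q. (\<forall>j. p j \<in> X j) \<Longrightarrow> (\<forall>j. q j \<in> X j) \<Longrightarrow>
        (\<Sum>i\<in>UNIV. inner (gv i p - gv i q) (p i - q i)) \<le> 0"
    and smooth: "\<And>p q. (\<forall>j. p j \<in> X j) \<Longrightarrow> (\<forall>j. q j \<in> X j) \<Longrightarrow>
        (\<Sum>i\<in>UNIV. (norm (gv i p - gv i q))\<^sup>2) \<le> L\<^sup>2 * (\<Sum>i\<in>UNIV. (norm (p i - q i))\<^sup>2)"
    and \<rho>_pos: "\<rho> > 0"
    and \<psi>_grad: "\<And>i x. x \<in> X i \<Longrightarrow> (\<psi> i has_derivative (\<lambda>h. inner (g\<psi> i x) h)) (at x within X i)"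
    and \<psi>_strong: "\<And>i. strongly_convex_on \<rho> (X i) (\<psi> i)"
    and G_grad: "\<And>i x s. x \<in> X i \<Longrightarrow> s \<in> X i \<Longrightarrow>
        ((\<lambda>y. G i y s) has_derivative (\<lambda>h. inner (gG i x s) h)) (at x within X i)"
    and \<beta>_pos: "\<beta> > 0" and \<gamma>_pos: "\<gamma> > 0"
    and G_bregman_bounds: "\<And>i s x x'. s \<in> X i \<Longrightarrow> x \<in> X i \<Longrightarrow> x' \<in> X i \<Longrightarrow>
        \<gamma> * bregman (\<psi> i) (g\<psi> i) x' x \<le> G i x' s - G i x s - inner (gG i x s) (x' - x)
      \<and> G i x' s - G i x s - inner (gG i x s) (x' - x) \<le> \<beta> * bregman (\<psi> i) (g\<psi> i) x' x"
    and \<mu>_pos: "\<mu> > 0"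
    and \<sigma>_in: "\<And>i. \<sigma> i \<in> X i"
    and eq_in: "\<And>i. \<pi>\<mu> i \<in> X i"
    and equilibrium_max: "\<And>i x. x \<in> X i \<Longrightarrow>
        v i (\<pi>\<mu>(i := x)) - \<mu> * G i x (\<sigma> i) \<le> v i \<pi>\<mu> - \<mu> * G i (\<pi>\<mu> i) (\<sigma> i)"
    and \<eta>_pos: "\<eta> > 0"
    and \<eta>_bound: "\<eta> < 2 * \<mu> * \<gamma> * \<rho>\<^sup>2 / (\<mu>\<^sup>2 * \<gamma> * \<rho>\<^sup>2 * (\<gamma> + 2 * \<beta>) + 8 * L\<^sup>2)"
    and init_in: "\<And>i. \<pi> 0 i \<in> X i"
    and step_in: "\<And>t i. \<pi> (Suc t) i \<in> X i"
    and step_max: "\<And>t i x. x \<in> X i \<Longrightarrow>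
        \<eta> * inner (gv i (\<pi> t) - \<mu> *\<^sub>R gG i (\<pi> t i) (\<sigma> i)) x - bregman (\<psi> i) (g\<psi> i) x (\<pi> t i)
      \<le> \<eta> * inner (gv i (\<pi> t) - \<mu> *\<^sub>R gG i (\<pi> t i) (\<sigma> i)) (\<pi> (Suc t) i)
          - bregman (\<psi> i) (g\<psi> i) (\<pi> (Suc t) i) (\<pi> t i)"
begin

abbreviation D :: "'i \<Rightarrow> 'a \<Rightarrow> 'a \<Rightarrow> real" where
  "D i \<equiv> bregman (\<psi> i) (g\<psi> i)"

abbreviation D_prof :: "('i \<Rightarrow> 'a) \<Rightarrow> ('i \<Rightarrow> 'a) \<Rightarrow> real" where
  "D_prof \<equiv> bregman_prof \<psi> g\<psi>"

lemma iterate_in: "\<pi> t i \<in> X i"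
  using init_in step_in by (cases t) auto

lemma bregman_ge_norm: "x \<in> X i \<Longrightarrow> y \<in> X i \<Longrightarrow> \<rho> / 2 * (norm (x - y))\<^sup>2 \<le> D i x y"
  by (rule bregman_ge_strongly_convex[OF \<psi>_strong \<psi>_grad])

lemma bregman_prof_ge_norm:
  assumes "\<forall>j. p j \<in> X j" "\<forall>j. q j \<in> X j"
  shows "\<rho> / 2 * (\<Sum>i\<in>UNIV. (norm (p i - q i))\<^sup>2) \<le> D_prof p q"
  unfolding bregman_prof_def sum_distrib_left
  using assms by (intro sum_mono bregman_ge_norm) auto

lemma bregman_prof_nonneg:
  assumes "\<forall>j. p j \<in> X j" "\<forall>j. q j \<in> X j"
  shows "0 \<le> D_prof p q"
proof -
  have "0 \<le> \<rho> / 2 * (\<Sum>i\<in>UNIV. (norm (p i - q i))\<^sup>2)"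
    using \<rho>_pos by (simp add: sum_nonneg)
  with bregman_prof_ge_norm[OF assms] show ?thesis by linarith
qed

lemma equilibrium_variational_inequality:
  assumes "z \<in> X i"
  shows "inner (gv i \<pi>\<mu> - \<mu> *\<^sub>R gG i (\<pi>\<mu> i) (\<sigma> i)) (z - \<pi>\<mu> i) \<le> 0"
proof -
  have "((\<lambda>x. v i (\<pi>\<mu>(i := x)) - \<mu> * G i x (\<sigma> i)) has_derivative
      (\<lambda>h. inner (gv i \<pi>\<mu>) h - \<mu> * inner (gG i (\<pi>\<mu> i) (\<sigma> i)) h)) (at (\<pi>\<mu> i) within X i)"
    using eq_in by (intro has_derivative_diff has_derivative_mult_right v_grad G_grad \<sigma>_in) auto
  from has_derivative_within_convex_maximum[OF this X_convex eq_in assms] equilibrium_max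
  show ?thesis by (simp add: inner_diff_left)
qed

lemma player_step:
  fixes t i
  defines "x \<equiv> \<pi> t" and "y \<equiv> \<pi> (Suc t)"
  shows "D i (\<pi>\<mu> i) (y i)
    \<le> (1 - \<eta> * \<mu> * \<gamma>) * D i (\<pi>\<mu> i) (x i) - (1 - \<eta> * \<mu> * \<beta>) * D i (y i) (x i)
      - \<eta> * \<mu> * \<gamma> * D i (y i) (\<pi>\<mu> i)
      + \<eta> * inner (gv i x - gv i y) (y i - \<pi>\<mu> i) + \<eta> * inner (gv i y - gv i \<pi>\<mu>) (y i - \<pi>\<mu> i)"
proof -
  let ?p = "\<pi>\<mu> i" and ?gG = "\<lambda>z. gG i z (\<sigma> i)"
  have x_in: "x i \<in> X i" and y_in: "y i \<in> X i"
    unfolding x_def y_def by (rule iterate_in)+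
  have three_point: "\<eta> * inner (gv i x - \<mu> *\<^sub>R ?gG (x i)) (?p - y i)
      \<le> D i ?p (x i) - D i ?p (y i) - D i (y i) (x i)"
    unfolding x_def y_def
    by (rule mirror_step_three_point[OF X_convex \<psi>_grad[OF step_in] step_max eq_in step_in])
  have "inner (gv i \<pi>\<mu> - \<mu> *\<^sub>R ?gG ?p) (y i - ?p) \<le> 0"
    by (rule equilibrium_variational_inequality[OF y_in])
  then have variational: "\<eta> * inner (gv i \<pi>\<mu> - \<mu> *\<^sub>R ?gG ?p) (y i - ?p) \<le> 0"
    using \<eta>_pos by (simp add: mult_nonneg_nonpos)
  have gradient_gap: "inner (?gG ?p - ?gG (x i)) (y i - ?p)
      \<le> \<beta> * D i (y i) (x i) - \<gamma> * D i (y i) ?p - \<gamma> * D i ?p (x i)"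
    using G_bregman_bounds[OF \<sigma>_in eq_in y_in] G_bregman_bounds[OF \<sigma>_in x_in eq_in]
      G_bregman_bounds[OF \<sigma>_in x_in y_in]
    by (intro inner_gradient_gap_le_bregman) (auto simp: bregman_def)
  have gap: "\<eta> * \<mu> * inner (?gG ?p - ?gG (x i)) (y i - ?p)
      \<le> \<eta> * \<mu> * \<beta> * D i (y i) (x i) - \<eta> * \<mu> * \<gamma> * D i (y i) ?p - \<eta> * \<mu> * \<gamma> * D i ?p (x i)"
    using mult_left_mono[OF gradient_gap, of "\<eta> * \<mu>"] \<eta>_pos \<mu>_pos by (simp add: algebra_simps)
  have "\<eta> * inner (gv i x - \<mu> *\<^sub>R ?gG (x i)) (?p - y i)
      = - \<eta> * inner (gv i x - gv i y) (y i - ?p) - \<eta> * inner (gv i y - gv i \<pi>\<mu>) (y i - ?p)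
        - \<eta> * inner (gv i \<pi>\<mu> - \<mu> *\<^sub>R ?gG ?p) (y i - ?p) - \<eta> * \<mu> * inner (?gG ?p - ?gG (x i)) (y i - ?p)"
    by (simp add: inner_diff_left inner_diff_right algebra_simps)
  with three_point variational gap show ?thesis
    by (simp add: algebra_simps)
qed

lemma gradient_drift_le:
  assumes x_in: "\<forall>j. x j \<in> X j" and y_in: "\<forall>j. y j \<in> X j" and p_in: "\<forall>j. p j \<in> X j"
  shows "(\<Sum>i\<in>UNIV. inner (gv i x - gv i y) (y i - p i))
    \<le> 2 * L\<^sup>2 / (\<mu> * \<gamma> * \<rho>\<^sup>2) * D_prof y x + \<mu> * \<gamma> / 2 * D_prof y p"
proof -
  define c where "c = \<mu> * \<gamma> * \<rho> / 2"
  have c_pos: "0 < c" using \<mu>_pos \<gamma>_pos \<rho>_pos by (simp add: c_def)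
  have "(\<Sum>i\<in>UNIV. inner (gv i x - gv i y) (y i - p i))
      \<le> (\<Sum>i\<in>UNIV. (norm (gv i x - gv i y))\<^sup>2) / (2 * c) + c / 2 * (\<Sum>i\<in>UNIV. (norm (y i - p i))\<^sup>2)"
    unfolding sum_divide_distrib sum_distrib_left sum.distrib[symmetric]
    by (intro sum_mono inner_le_Young c_pos)
  also have "\<dots> \<le> L\<^sup>2 * (\<Sum>i\<in>UNIV. (norm (y i - x i))\<^sup>2) / (2 * c) + c / 2 * (\<Sum>i\<in>UNIV. (norm (y i - p i))\<^sup>2)"
    using smooth[OF x_in y_in] c_pos by (simp add: divide_right_mono norm_minus_commute)
  also have "\<dots> \<le> L\<^sup>2 * (2 / \<rho> * D_prof y x) / (2 * c) + c / 2 * (2 / \<rho> * D_prof y p)"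
    using bregman_prof_ge_norm[OF y_in x_in] bregman_prof_ge_norm[OF y_in p_in] \<rho>_pos c_pos
    by (intro add_mono divide_right_mono mult_left_mono) (auto simp: field_simps)
  also have "\<dots> = 2 * L\<^sup>2 / (\<mu> * \<gamma> * \<rho>\<^sup>2) * D_prof y x + \<mu> * \<gamma> / 2 * D_prof y p"
    using \<mu>_pos \<gamma>_pos \<rho>_pos by (simp add: c_def field_simps power2_eq_square)
  finally show ?thesis .
qed

lemma contraction:
  "D_prof \<pi>\<mu> (\<pi> (Suc t)) \<le> (1 - \<eta> * \<mu> * \<gamma>) * D_prof \<pi>\<mu> (\<pi> t)"
proof -
  let ?x = "\<pi> t" and ?y = "\<pi> (Suc t)"
  have x_in: "\<forall>j. ?x j \<in> X j" and y_in: "\<forall>j. ?y j \<in> X j" and p_in: "\<forall>j. \<pi>\<mu> j \<in> X j"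
    using iterate_in eq_in by blast+
  define \<kappa> where "\<kappa> = 1 - \<eta> * \<mu> * \<beta> - 2 * \<eta> * L\<^sup>2 / (\<mu> * \<gamma> * \<rho>\<^sup>2)"
  have "\<kappa> \<ge> 0"
    using learning_rate_bounds(2)[OF \<rho>_pos \<beta>_pos \<gamma>_pos \<mu>_pos \<eta>_pos \<eta>_bound] by (simp add: \<kappa>_def)
  then have drop: "0 \<le> \<kappa> * D_prof ?y ?x + \<eta> * \<mu> * \<gamma> / 2 * D_prof ?y \<pi>\<mu>"
    using bregman_prof_nonneg[OF y_in x_in] bregman_prof_nonneg[OF y_in p_in] \<eta>_pos \<mu>_pos \<gamma>_pos
    by simp
  have "D_prof \<pi>\<mu> ?y
      \<le> (1 - \<eta> * \<mu> * \<gamma>) * D_prof \<pi>\<mu> ?x - (1 - \<eta> * \<mu> * \<beta>) * D_prof ?y ?x - \<eta> * \<mu> * \<gamma> * D_prof ?y \<pi>\<mu>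
        + \<eta> * (\<Sum>i\<in>UNIV. inner (gv i ?x - gv i ?y) (?y i - \<pi>\<mu> i))
        + \<eta> * (\<Sum>i\<in>UNIV. inner (gv i ?y - gv i \<pi>\<mu>) (?y i - \<pi>\<mu> i))"
    unfolding bregman_prof_def sum_distrib_left sum_subtractf[symmetric] sum.distrib[symmetric]
    by (intro sum_mono player_step)
  also have "\<dots> \<le> (1 - \<eta> * \<mu> * \<gamma>) * D_prof \<pi>\<mu> ?x - (1 - \<eta> * \<mu> * \<beta>) * D_prof ?y ?x - \<eta> * \<mu> * \<gamma> * D_prof ?y \<pi>\<mu>
        + \<eta> * (2 * L\<^sup>2 / (\<mu> * \<gamma> * \<rho>\<^sup>2) * D_prof ?y ?x + \<mu> * \<gamma> / 2 * D_prof ?y \<pi>\<mu>)"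
    using mult_left_mono[OF gradient_drift_le[OF x_in y_in p_in], of \<eta>]
      mult_nonneg_nonpos[OF _ monotone[OF y_in p_in], of \<eta>] \<eta>_pos
    by linarith
  also have "\<dots> = (1 - \<eta> * \<mu> * \<gamma>) * D_prof \<pi>\<mu> ?x
      - (\<kappa> * D_prof ?y ?x + \<eta> * \<mu> * \<gamma> / 2 * D_prof ?y \<pi>\<mu>)"
    by (simp add: \<kappa>_def algebra_simps)
  finally show ?thesis using drop by linarith
qed

lemma linear_convergence:
  "D_prof \<pi>\<mu> (\<pi> t) \<le> D_prof \<pi>\<mu> (\<pi> 0) * (1 - \<eta> * \<mu> * \<gamma> / 2) ^ t"
proof (rule geometric_decay)
  have "\<eta> * \<mu> * \<gamma> < 2"
    by (rule learning_rate_bounds(1)[OF \<rho>_pos \<beta>_pos \<gamma>_pos \<mu>_pos \<eta>_pos \<eta>_bound])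
  then show "0 \<le> 1 - \<eta> * \<mu> * \<gamma> / 2" by simp
next
  fix t
  have "0 \<le> D_prof \<pi>\<mu> (\<pi> t)"
    using bregman_prof_nonneg eq_in iterate_in by blast
  then have "(1 - \<eta> * \<mu> * \<gamma>) * D_prof \<pi>\<mu> (\<pi> t) \<le> (1 - \<eta> * \<mu> * \<gamma> / 2) * D_prof \<pi>\<mu> (\<pi> t)"
    using \<eta>_pos \<mu>_pos \<gamma>_pos by (intro mult_right_mono) auto
  with contraction[of t]
  show "D_prof \<pi>\<mu> (\<pi> (Suc t)) \<le> (1 - \<eta> * \<mu> * \<gamma> / 2) * D_prof \<pi>\<mu> (\<pi> t)"
    by linarith
qed

end

theorem theorem4:
  fixes X :: "'i::finite \<Rightarrow> 'a::euclidean_space set"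
    and v :: "'i \<Rightarrow> ('i \<Rightarrow> 'a) \<Rightarrow> real"
    and gv :: "'i \<Rightarrow> ('i \<Rightarrow> 'a) \<Rightarrow> 'a"
    and \<psi> :: "'i \<Rightarrow> 'a \<Rightarrow> real" and g\<psi> :: "'i \<Rightarrow> 'a \<Rightarrow> 'a"
    and G :: "'i \<Rightarrow> 'a \<Rightarrow> 'a \<Rightarrow> real" and gG :: "'i \<Rightarrow> 'a \<Rightarrow> 'a \<Rightarrow> 'a"
    and L \<rho> \<beta> \<gamma> \<mu> \<eta> :: real
    and \<sigma> \<pi>\<mu> :: "'i \<Rightarrow> 'a"
    and \<pi> :: "nat \<Rightarrow> 'i \<Rightarrow> 'a"
  assumes X_nonempty: "\<And>i. X i \<noteq> {}"
    and X_compact: "\<And>i. compact (X i)"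
    and X_convex: "\<And>i. convex (X i)"
    \<comment> \<open>block gradients of the payoffs\<close>
    and v_grad: "\<And>p i. (\<forall>j. p j \<in> X j) \<Longrightarrow>
        ((\<lambda>x. v i (p(i := x))) has_derivative (\<lambda>h. inner (gv i p) h)) (at (p i) within X i)"
    \<comment> \<open>monotone game\<close>
    and monotone: "\<And>p q. (\<forall>j. p j \<in> X j) \<Longrightarrow> (\<forall>j. q j \<in> X j) \<Longrightarrow>
        (\<Sum>i\<in>UNIV. inner (gv i p - gv i q) (p i - q i)) \<le> 0"
    \<comment> \<open>L-smooth game\<close>
    and smooth: "\<And>p q. (\<forall>j. p j \<in> X j) \<Longrightarrow> (\<forall>j. q j \<in> X j) \<Longrightarrow>
        (\<Sum>i\<in>UNIV. (norm (gv i p - gv i q))\<^sup>2) \<le> L\<^sup>2 * (\<Sum>i\<in>UNIV. (norm (p i - q i))\<^sup>2)"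
    \<comment> \<open>regularizer\<close>
    and \<rho>_pos: "\<rho> > 0"
    and \<psi>_grad: "\<And>i x. x \<in> X i \<Longrightarrow> (\<psi> i has_derivative (\<lambda>h. inner (g\<psi> i x) h)) (at x within X i)"
    and \<psi>_strong: "\<And>i. strongly_convex_on \<rho> (X i) (\<psi> i)"
    \<comment> \<open>perturbation function\<close>
    and G_nonneg: "\<And>i x s. x \<in> X i \<Longrightarrow> s \<in> X i \<Longrightarrow> G i x s \<ge> 0"
    and G_grad: "\<And>i x s. x \<in> X i \<Longrightarrow> s \<in> X i \<Longrightarrow>
        ((\<lambda>y. G i y s) has_derivative (\<lambda>h. inner (gG i x s) h)) (at x within X i)"
    and G_strict: "\<And>i s. s \<in> X i \<Longrightarrow> strict_convex_on (X i) (\<lambda>y. G i y s)"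
    and G_zero: "\<And>i s. s \<in> X i \<Longrightarrow> G i s s = 0"
    \<comment> \<open>Assumption A\<close>
    and \<beta>_pos: "\<beta> > 0" and \<gamma>_pos: "\<gamma> > 0"
    and assmA: "\<And>i s x x'. s \<in> X i \<Longrightarrow> x \<in> X i \<Longrightarrow> x' \<in> X i \<Longrightarrow>
        \<gamma> * bregman (\<psi> i) (g\<psi> i) x' x \<le> G i x' s - G i x s - inner (gG i x s) (x' - x)
      \<and> G i x' s - G i x s - inner (gG i x s) (x' - x) \<le> \<beta> * bregman (\<psi> i) (g\<psi> i) x' x"
    \<comment> \<open>perturbed equilibrium\<close>
    and \<mu>_pos: "\<mu> > 0"
    and \<sigma>_in: "\<And>i. \<sigma> i \<in> X i"
    and eq_in: "\<And>i. \<pi>\<mu> i \<in> X i"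
    and eq_max: "\<And>i x. x \<in> X i \<Longrightarrow>
        v i (\<pi>\<mu>(i := x)) - \<mu> * G i x (\<sigma> i) \<le> v i \<pi>\<mu> - \<mu> * G i (\<pi>\<mu> i) (\<sigma> i)"
    \<comment> \<open>learning rate\<close>
    and \<eta>_pos: "\<eta> > 0"
    and \<eta>_bound: "\<eta> < 2 * \<mu> * \<gamma> * \<rho>\<^sup>2 / (\<mu>\<^sup>2 * \<gamma> * \<rho>\<^sup>2 * (\<gamma> + 2 * \<beta>) + 8 * L\<^sup>2)"
    \<comment> \<open>MD-SP with full feedback\<close>
    and init_in: "\<And>i. \<pi> 0 i \<in> X i"
    and step_in: "\<And>t i. \<pi> (Suc t) i \<in> X i"
    and step_max: "\<And>t i x. x \<in> X i \<Longrightarrow>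
        \<eta> * inner (gv i (\<pi> t) - \<mu> *\<^sub>R gG i (\<pi> t i) (\<sigma> i)) x - bregman (\<psi> i) (g\<psi> i) x (\<pi> t i)
      \<le> \<eta> * inner (gv i (\<pi> t) - \<mu> *\<^sub>R gG i (\<pi> t i) (\<sigma> i)) (\<pi> (Suc t) i)
          - bregman (\<psi> i) (g\<psi> i) (\<pi> (Suc t) i) (\<pi> t i)"
  shows "\<forall>t\<ge>1. bregman_prof \<psi> g\<psi> \<pi>\<mu> (\<pi> t)
            \<le> bregman_prof \<psi> g\<psi> \<pi>\<mu> (\<pi> 0) * (1 - \<eta> * \<mu> * \<gamma> / 2) ^ t"
proof -
  interpret perturbed_mirror_descent X v gv \<psi> g\<psi> G gG L \<rho> \<beta> \<gamma> \<mu> \<eta> \<sigma> \<pi>\<mu> \<pi>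
    by unfold_locales (fact assms)+
  show ?thesis using linear_convergence by blast
qed

end
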